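(* Let $n\ge1$, let $p_0$ be the origin of $\mathbb{Z}^n$ and let $p=(p_1,\dots,p_n)\in\mathbb{Z}^n$ with all $p_j\ge 0$. Then there exists at least one linear path from $p_0$ to $p$, i.e. a monotone discrete path $H=(h_0=p_0,h_1,\dots,h_N=p)$ with $N=p_1+\dots+p_n$ such that for every point $h\in H$, the voxel centered at $h$ intersects the line segment $\overline{p_0p}$.
   Context: A monotone discrete path from $p_0$ to $p$ is a sequence of points of $\mathbb{Z}^n$ starting at $p_0$ and ending at $p$ in which each successive point is obtained from the previous one by increasing exactly one coordinate by $1$. The voxel centered at a grid point $h=(h_1,\dots,h_n)\in\mathbb{Z}^n$ is the closed axis-parallel unit hypercube $\prod_{j=1}^n[h_j-\tfrac12,h_j+\tfrac12]$. A monotone discrete path from $p_0$ to $p$ is called linear if the voxel centered at each of its points intersects the segment $\overline{p_0p}$. *)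

theory Defs
  imports "HOL-Analysis.Analysis"
begin

text \<open>Points of Z^n are modelled as int^'n, with 'n an arbitrary finite (nonempty) index type,
so n = CARD('n) >= 1.\<close>

definition real_pt :: "int^'n \<Rightarrow> real^'n" where
  "real_pt h = (\<chi> j. of_int (h $ j))"

definition voxel :: "int^'n \<Rightarrow> (real^'n) set" where
  "voxel h = {x. \<forall>j. \<bar>x $ j - of_int (h $ j)\<bar> \<le> 1/2}"

definition monotone_path :: "int^'n \<Rightarrow> int^'n \<Rightarrow> (int^'n) list \<Rightarrow> bool" where
  "monotone_path a b H \<longleftrightarrow> H \<noteq> [] \<and> hd H = a \<and> last H = b \<and>
     (\<forall>i. Suc i < length H \<longrightarrow> (\<exists>j. H ! Suc i = H ! i + axis j 1))"

definition linear_path :: "int^'n \<Rightarrow> int^'n \<Rightarrow> (int^'n) list \<Rightarrow> bool" where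
  "linear_path a b H \<longleftrightarrow> monotone_path a b H \<and>
     (\<forall>h\<in>set H. voxel h \<inter> closed_segment (real_pt a) (real_pt b) \<noteq> {})"

end

theory Submission
  imports Defs
begin

text \<open>The path is built greedily while maintaining that the voxel of the current point meets
the segment at some parameter \<open>t\<close>. Among the coordinates not yet at their target, advance one
whose exit time \<open>(h\<^sub>j + 1/2) / p\<^sub>j\<close> from the voxel is smallest; at that moment the segment
point lies on the face shared by the voxels of \<open>h\<close> and \<open>h + e\<^sub>j\<close>, so the invariant survives.\<close>

definition meets_segment :: "int^'n \<Rightarrow> int^'n \<Rightarrow> bool" where
  "meets_segment p h \<longleftrightarrow>
     (\<exists>t::real. 0 \<le> t \<and> t \<le> 1 \<and> (\<forall>i. \<bar>t * of_int (p$i) - of_int (h$i)\<bar> \<le> 1/2))"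

lemma meets_segment_imp_voxel_inter:
  assumes "meets_segment p h"
  shows "voxel h \<inter> closed_segment (real_pt 0) (real_pt p) \<noteq> {}"
proof -
  obtain t :: real where t: "0 \<le> t" "t \<le> 1" "\<forall>i. \<bar>t * of_int (p$i) - of_int (h$i)\<bar> \<le> 1/2"
    using assms unfolding meets_segment_def by blast
  have "t *\<^sub>R real_pt p \<in> voxel h"
    using t(3) by (simp add: voxel_def real_pt_def)
  moreover have "t *\<^sub>R real_pt p \<in> closed_segment (real_pt 0) (real_pt p)"
    using t(1,2) unfolding closed_segment_def real_pt_def
    by (auto intro!: exI[of _ t] simp: vec_eq_iff)
  ultimately show ?thesis by blast
qed

lemma meets_segment_step:
  fixes p h :: "int^'n"
  assumes p_nonneg: "\<forall>i. 0 \<le> p$i" and meets: "meets_segment p h" and "h$k < p$k"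
  shows "\<exists>j. h$j < p$j \<and> meets_segment p (h + axis j 1)"
proof -
  obtain t :: real where t: "0 \<le> t" "t \<le> 1" "\<forall>i. \<bar>t * of_int (p$i) - of_int (h$i)\<bar> \<le> 1/2"
    using meets unfolding meets_segment_def by blast
  define S where "S = {i. h$i < p$i}"
  define exit_time where "exit_time i = (of_int (h$i) + 1/2) / (of_int (p$i) :: real)" for i
  define j where "j = arg_min_on exit_time S"
  have "finite S" "S \<noteq> {}"
    using \<open>h$k < p$k\<close> by (auto simp: S_def)
  then have "j \<in> S" and j_min: "\<forall>i\<in>S. exit_time j \<le> exit_time i"
    using arg_min_if_finite[of S exit_time] by (auto simp: j_def not_less)
  have p_pos: "0 < p$i" if "i \<in> S" for i
  proof (rule ccontr)
    assume "\<not> 0 < p$i"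
    then have "p$i = 0"
      using p_nonneg[rule_format, of i] by linarith
    then have "\<bar>of_int (h$i)\<bar> \<le> (1/2::real)"
      using t(3)[rule_format, of i] by simp
    then have "h$i = 0" by linarith
    with \<open>p$i = 0\<close> \<open>i \<in> S\<close> show False by (simp add: S_def)
  qed
  have exit_time_eq: "exit_time i * of_int (p$i) = of_int (h$i) + 1/2" if "i \<in> S" for i
    using p_pos[OF that] by (simp add: exit_time_def)
  have "t * of_int (p$j) \<le> exit_time j * of_int (p$j)"
    using t(3)[rule_format, of j] exit_time_eq[OF \<open>j \<in> S\<close>] by linarith
  then have t_le: "t \<le> exit_time j"
    using p_pos[OF \<open>j \<in> S\<close>] by simp
  have exit_le_1: "exit_time j \<le> 1"
    using \<open>j \<in> S\<close> p_pos[OF \<open>j \<in> S\<close>] by (simp add: exit_time_def S_def)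
  have "\<bar>exit_time j * of_int (p$i) - of_int ((h + axis j 1)$i)\<bar> \<le> 1/2" for i
  proof (cases "i = j")
    case True
    then show ?thesis using exit_time_eq[OF \<open>j \<in> S\<close>] by (simp add: axis_def)
  next
    case False
    have lower: "t * of_int (p$i) \<le> exit_time j * of_int (p$i)"
      using t_le p_nonneg by (simp add: mult_right_mono)
    have upper: "exit_time j * of_int (p$i) \<le> of_int (h$i) + 1/2"
    proof (cases "i \<in> S")
      case True
      then have "exit_time j * of_int (p$i) \<le> exit_time i * of_int (p$i)"
        using j_min p_nonneg by (simp add: mult_right_mono)
      then show ?thesis using exit_time_eq[OF True] by simp
    next
      case False
      have "exit_time j * of_int (p$i) \<le> of_int (p$i)"
        using exit_le_1 p_nonneg mult_right_mono[of "exit_time j" 1 "of_int (p$i)"] by simp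
      then show ?thesis using False by (simp add: S_def)
    qed
    have "(h + axis j 1)$i = h$i"
      using False by (simp add: axis_def)
    then show ?thesis
      using t(3)[rule_format, of i] lower upper by (simp only: abs_le_iff) linarith
  qed
  then have "meets_segment p (h + axis j 1)"
    unfolding meets_segment_def using t(1) t_le exit_le_1 by (intro exI[of _ "exit_time j"]) auto
  with \<open>j \<in> S\<close> show ?thesis by (auto simp: S_def)
qed

lemma monotone_path_Cons:
  assumes "monotone_path (a + axis j 1) b H"
  shows "monotone_path a b (a # H)"
proof -
  have "\<exists>j. (a # H) ! Suc i = (a # H) ! i + axis j 1" if "Suc i < length (a # H)" for i
    using assms that by (cases i) (auto simp: monotone_path_def hd_conv_nth)
  then show ?thesis
    using assms by (auto simp: monotone_path_def)
qed

lemma meets_segment_path_exists: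
  fixes p h :: "int^'n"
  assumes p_nonneg: "\<forall>i. 0 \<le> p$i" and "meets_segment p h" and "\<forall>i. h$i \<le> p$i"
  shows "\<exists>H. monotone_path h p H \<and> length H = nat (\<Sum>i\<in>UNIV. p$i - h$i) + 1 \<and>
             (\<forall>g\<in>set H. meets_segment p g)"
  using assms(2,3)
proof (induction "nat (\<Sum>i\<in>UNIV. p$i - h$i)" arbitrary: h)
  case 0
  have "0 \<le> (\<Sum>i\<in>UNIV. p$i - h$i)"
    using "0.prems"(2) by (simp add: sum_nonneg)
  with 0 have "\<forall>i\<in>UNIV. p$i - h$i = 0"
    by (subst sum_nonneg_eq_0_iff[symmetric]) auto
  then have "h = p"
    by (simp add: vec_eq_iff)
  then show ?case
    using "0.prems"(1) by (intro exI[of _ "[p]"]) (simp add: monotone_path_def)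
next
  case (Suc n)
  have "\<exists>k. h$k < p$k"
  proof (rule ccontr)
    assume "\<nexists>k. h$k < p$k"
    then have "\<forall>i\<in>UNIV. p$i - h$i = 0"
      using Suc.prems(2) by (simp add: not_less order_antisym)
    with Suc.hyps(2) show False by simp
  qed
  then obtain j where "h$j < p$j" and meets': "meets_segment p (h + axis j 1)"
    using meets_segment_step p_nonneg Suc.prems(1) by blast
  have "(\<Sum>i\<in>UNIV. p$i - (h + axis j 1)$i) = (\<Sum>i\<in>UNIV. p$i - h$i) - 1"
    by (simp add: sum_subtractf sum.distrib axis_def)
  moreover have "\<forall>i. (h + axis j 1)$i \<le> p$i"
    using Suc.prems(2) \<open>h$j < p$j\<close> by (simp add: axis_def)
  ultimately obtain H where "monotone_path (h + axis j 1) p H" and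
    "length H = n + 1" and "\<forall>g\<in>set H. meets_segment p g"
    using Suc.hyps(1)[of "h + axis j 1"] Suc.hyps(2) meets' by fastforce
  then show ?case
    using monotone_path_Cons Suc.hyps(2) Suc.prems(1) by (intro exI[of _ "h # H"]) auto
qed

theorem fact1:
  fixes p :: "int^'n"
  assumes "\<forall>j. p $ j \<ge> 0"
  shows "\<exists>H. linear_path 0 p H \<and> length H = nat (\<Sum>j\<in>UNIV. p $ j) + 1"
proof -
  have "meets_segment p 0"
    unfolding meets_segment_def by (intro exI[of _ 0]) simp
  then obtain H where "monotone_path 0 p H" "length H = nat (\<Sum>j\<in>UNIV. p $ j) + 1"
    and "\<forall>g\<in>set H. meets_segment p g"
    using meets_segment_path_exists[of p 0] assms by auto
  then show ?thesis
    unfolding linear_path_def using meets_segment_imp_voxel_inter by blast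
qed

end
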